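(* Let $0<\mu<L$, $\kappa=L/\mu$, and let $m(z)=z^n+\sum_{i=0}^{n-1}m_iz^i\in\mathbb{R}[z]$ be monic of degree $n\ge1$. Let $d(z)\in\mathbb{R}[z]$ with $\deg d<n$, and let $\rho>0$ be such that for every $\lambda\in[\mu,L]$ all roots of $m(z)-\lambda d(z)$ have modulus at most $\rho$. Then $$\rho\ \ge\ \max_{k=1,\dots,n}\Bigl(\frac{|m_{n-k}|}{\binom{n}{k}}\cdot\frac{\kappa-1}{\kappa+1}\Bigr)^{1/k}.$$
   Context: Here $m_{n-k}$ denotes the coefficient of $z^{n-k}$ in $m(z)$ (with $m_n=1$ implicitly for the leading coefficient, so that the $k=n$ term uses $m_0$). *)

theory Defs
  imports "HOL-Analysis.Analysis" "HOL-Computational_Algebra.Polynomial"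
begin

end

theory Submission
  imports Defs "HOL-Computational_Algebra.Fundamental_Theorem_Algebra"
begin

text \<open>
  For every \<open>\<lambda> \<in> [\<mu>, L]\<close> the polynomial \<open>m - \<lambda> d\<close> is monic of degree \<open>n\<close> with all roots
  in the disc of radius \<open>\<rho>\<close>, so by Vieta its coefficient of \<open>z\<^sup>n\<^sup>-\<^sup>k\<close> is at most
  \<open>C(n,k) \<rho>\<^sup>k\<close> in modulus. Since \<open>deg d < n\<close>, that coefficient is \<open>m\<^sub>n\<^sub>-\<^sub>k - \<lambda> d\<^sub>n\<^sub>-\<^sub>k\<close>;
  comparing the two endpoints \<open>\<lambda> = \<mu>\<close> and \<open>\<lambda> = L\<close> eliminates \<open>d\<^sub>n\<^sub>-\<^sub>k\<close> and yields
  \<open>|m\<^sub>n\<^sub>-\<^sub>k| (L - \<mu>)/(L + \<mu>) \<le> C(n,k) \<rho>\<^sup>k\<close>.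
\<close>

lemma coeff_bound_of_roots_in_cball:
  fixes p :: "complex poly" and \<rho> :: real
  assumes "lead_coeff p = 1" and "0 \<le> \<rho>" and "\<And>z. poly p z = 0 \<Longrightarrow> cmod z \<le> \<rho>"
  shows "cmod (coeff p j) \<le> real (degree p choose j) * \<rho> ^ (degree p - j)"
  using assms(1,3)
proof (induction "degree p" arbitrary: p j)
  case 0
  then have "p = 1"
    using degree_0_id[of p] by (simp add: one_pCons)
  then show ?case
    by (cases j) auto
next
  case (Suc n p)
  then have "\<not> constant (poly p)"
    using constant_degree by force
  then obtain r where r: "poly p r = 0"
    using fundamental_theorem_of_algebra by blast
  then obtain q where pq: "p = [:-r, 1:] * q"
    using poly_eq_0_iff_dvd by (metis dvdE)
  with Suc.hyps have "q \<noteq> 0"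
    by auto
  then have "degree p = Suc (degree q)"
    unfolding pq by (subst degree_mult_eq) auto
  with Suc.hyps(2) have deg_q: "degree q = n"
    by simp
  have "lead_coeff p = lead_coeff q"
    unfolding pq by (subst lead_coeff_mult) simp
  with Suc.prems(1) have "lead_coeff q = 1"
    by simp
  moreover have "\<And>z. poly q z = 0 \<Longrightarrow> cmod z \<le> \<rho>"
    using Suc.prems(2) pq by auto
  ultimately have IH: "\<And>i. cmod (coeff q i) \<le> real (n choose i) * \<rho> ^ (n - i)"
    using Suc.hyps(1) deg_q by blast
  have r_le: "cmod r \<le> \<rho>"
    using Suc.prems(2) r by blast
  have p_eq: "p = pCons 0 q - smult r q"
    using pq by (simp add: algebra_simps)
  show ?case
  proof (cases j)
    case 0
    have "cmod (coeff p j) = cmod r * cmod (coeff q 0)"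
      using 0 p_eq by (simp add: norm_mult)
    also have "\<dots> \<le> \<rho> * \<rho> ^ n"
      using IH[of 0] r_le assms(2) by (intro mult_mono) auto
    finally show ?thesis
      using 0 Suc.hyps(2)[symmetric] by simp
  next
    case (Suc i)
    have "cmod (coeff p j) = cmod (coeff q i - r * coeff q j)"
      using Suc p_eq by simp
    also have "\<dots> \<le> cmod (coeff q i) + cmod r * cmod (coeff q j)"
      by (metis norm_mult norm_triangle_ineq4)
    also have "\<dots> \<le> real (n choose i) * \<rho> ^ (n - i) + \<rho> * (real (n choose j) * \<rho> ^ (n - j))"
      using IH[of i] IH[of j] r_le assms(2) by (intro add_mono mult_mono) auto
    also have "\<dots> = real (Suc n choose j) * \<rho> ^ (Suc n - j)"
    proof (cases "j \<le> n")
      case True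
      then have "n - i = Suc (n - j)" and "Suc n - j = n - i"
        using Suc by auto
      then show ?thesis
        using Suc by (simp add: algebra_simps)
    next
      case False
      then show ?thesis
        using Suc by auto
    qed
    finally show ?thesis
      using Suc.hyps(2)[symmetric] by simp
  qed
qed

lemma coeff_bound_of_complex_roots_in_cball:
  fixes q :: "real poly" and \<rho> :: real
  assumes "lead_coeff q = 1" and "0 \<le> \<rho>"
    and "\<And>z. poly (map_poly complex_of_real q) z = 0 \<Longrightarrow> cmod z \<le> \<rho>"
  shows "\<bar>coeff q j\<bar> \<le> real (degree q choose j) * \<rho> ^ (degree q - j)"
proof -
  let ?p = "map_poly complex_of_real q"
  have "degree ?p = degree q" and "lead_coeff ?p = 1"
    using assms(1) by (simp_all add: degree_map_poly coeff_map_poly)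
  then show ?thesis
    using coeff_bound_of_roots_in_cball[of ?p \<rho> j] assms by (simp add: coeff_map_poly)
qed

lemma degree_diff_smult_less:
  fixes m d :: "'a::comm_ring poly"
  assumes "degree d < degree m"
  shows "degree (m - smult c d) = degree m" and "lead_coeff (m - smult c d) = lead_coeff m"
proof -
  have "degree (- smult c d) < degree m"
    unfolding degree_minus using degree_smult_le assms by (rule le_less_trans)
  from degree_add_eq_left[OF this] show deg: "degree (m - smult c d) = degree m"
    by simp
  have "coeff d (degree m) = 0"
    using assms by (simp add: coeff_eq_0)
  with deg show "lead_coeff (m - smult c d) = lead_coeff m"
    by simp
qed

text \<open>\<open>L (a - \<mu> b) - \<mu> (a - L b) = (L - \<mu>) a\<close>.\<close>
lemma abs_bound_from_two_slopes:
  fixes a b \<mu> L M :: real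
  assumes "0 \<le> \<mu>" "0 \<le> L" "\<bar>a - \<mu> * b\<bar> \<le> M" "\<bar>a - L * b\<bar> \<le> M"
  shows "(L - \<mu>) * \<bar>a\<bar> \<le> (L + \<mu>) * M"
proof -
  have "(L - \<mu>) * \<bar>a\<bar> \<le> \<bar>(L - \<mu>) * a\<bar>"
    by (simp add: abs_mult mult_right_mono)
  also have "\<dots> = \<bar>L * (a - \<mu> * b) - \<mu> * (a - L * b)\<bar>"
    by (simp add: algebra_simps)
  also have "\<dots> \<le> \<bar>L * (a - \<mu> * b)\<bar> + \<bar>\<mu> * (a - L * b)\<bar>"
    by (rule abs_triangle_ineq4)
  also have "\<dots> = L * \<bar>a - \<mu> * b\<bar> + \<mu> * \<bar>a - L * b\<bar>"
    using assms(1,2) by (simp add: abs_mult)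
  also have "\<dots> \<le> L * M + \<mu> * M"
    using assms by (intro add_mono mult_left_mono) auto
  also have "\<dots> = (L + \<mu>) * M"
    by (simp add: distrib_right)
  finally show ?thesis .
qed

lemma powr_inverse_le_of_le_power:
  fixes x \<rho> :: real
  assumes "0 < k" "0 \<le> x" "0 \<le> \<rho>" "x \<le> \<rho> ^ k"
  shows "x powr (1 / real k) \<le> \<rho>"
proof -
  have "x powr (1 / real k) = root k x"
    using assms by (simp add: root_powr_inverse)
  also have "\<dots> \<le> root k (\<rho> ^ k)"
    using assms by (simp add: real_root_le_mono)
  also have "\<dots> = \<rho>"
    using assms by (simp add: real_root_power_cancel)
  finally show ?thesis .
qed

theorem mainTheorem5:
  fixes \<mu> L \<rho> :: real and m d :: "real poly" and n :: nat
  assumes "0 < \<mu>" and "\<mu> < L"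
    and "n \<ge> 1" and "degree m = n" and "lead_coeff m = 1"
    and "degree d < n"
    and "0 < \<rho>"
    and "\<forall>lam\<in>{\<mu>..L}. \<forall>z::complex.
           poly (map_poly complex_of_real (m - smult lam d)) z = 0 \<longrightarrow> cmod z \<le> \<rho>"
  shows "\<rho> \<ge> Max ((\<lambda>k. (\<bar>coeff m (n - k)\<bar> / real (n choose k)
                 * ((L / \<mu> - 1) / (L / \<mu> + 1))) powr (1 / real k)) ` {1..n})"
proof (rule Max.boundedI, simp, use assms(3) in simp, clarify)
  fix k assume k: "k \<in> {1..n}"
  have coeff_bound: "\<bar>coeff m (n - k) - lam * coeff d (n - k)\<bar> \<le> real (n choose k) * \<rho> ^ k"
    if "lam \<in> {\<mu>..L}" for lam
    using coeff_bound_of_complex_roots_in_cball[of "m - smult lam d" \<rho> "n - k"]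
      degree_diff_smult_less[of d m lam] assms that k
    by (simp add: binomial_symmetric[symmetric])
  let ?c = "\<bar>coeff m (n - k)\<bar>" and ?C = "real (n choose k)"
  have key: "(L - \<mu>) * ?c \<le> ((L + \<mu>) * ?C) * \<rho> ^ k"
    using abs_bound_from_two_slopes[OF _ _ coeff_bound[of \<mu>] coeff_bound[of L]] assms(1,2)
    by (simp add: mult.assoc)
  have kappa: "(L / \<mu> - 1) / (L / \<mu> + 1) = (L - \<mu>) / (L + \<mu>)"
    using assms(1) by (simp add: divide_simps)
  have "?c / ?C * ((L - \<mu>) / (L + \<mu>)) = (L - \<mu>) * ?c / ((L + \<mu>) * ?C)"
    by (simp add: ac_simps)
  also have "\<dots> \<le> \<rho> ^ k"
    using key assms(1,2) k by (simp add: pos_divide_le_eq mult.commute)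
  finally have bound: "?c / ?C * ((L - \<mu>) / (L + \<mu>)) \<le> \<rho> ^ k" .
  have "0 \<le> ?c / ?C * ((L - \<mu>) / (L + \<mu>))"
    using assms(1,2) by simp
  from powr_inverse_le_of_le_power[OF _ this _ bound] k assms(7)
  show "(?c / ?C * ((L / \<mu> - 1) / (L / \<mu> + 1))) powr (1 / real k) \<le> \<rho>"
    unfolding kappa by simp
qed

end
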